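(* Let $G$ be a locally compact abelian group and let $\mu\in M(G)$ be a real-valued (signed) measure that is antisymmetric, i.e. $\mu(-A)=-\mu(A)$ for every Borel set $A\subset G$. Let $\mu=\mu^+-\mu^-$ be its Jordan decomposition and let $A^+,A^-$ be a Hahn decomposition for $\mu$. Set $V=A^+\cap(-A^-)$. Then $V\cap(-V)=\emptyset$; for every Borel set $E\subset G$, $$\mu^+(E)=\mu(E\cap A^+)=\mu(E\cap V),\qquad \mu^-(E)=-\mu(E\cap A^-)=-\mu(E\cap(-V));$$ and $$\mu^+(V)=\|\mu^+\|=\|\mu^-\|=\mu^-(-V)=\tfrac12\|\mu\|.$$
   Context: $M(G)$ is the space of bounded regular complex Borel measures on $G$ with total variation norm $\|\cdot\|$. For a Borel set $A$, $-A=\{x\in G:-x\in A\}$. The Jordan decomposition of a signed measure $\mu$ is the unique representation $\mu=\mu^+-\mu^-$ with $\mu^+,\mu^-$ mutually singular nonnegative measures in $M(G)$; a Hahn decomposition is a pair of disjoint Borel sets $A^+,A^-$ with $A^+\cup A^-=G$ such that $\mu^+(A^-)=\mu^-(A^+)=0$, equivalently $A^+$ is a positive set and $A^-$ a negative set for $\mu$, and then $\mu^+(E)=\mu(E\cap A^+)$, $\mu^-(E)=-\mu(E\cap A^-)$. *)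

theory Defs
  imports "HOL-Analysis.Analysis"
begin

definition signed_borel_measure :: "('a::topological_space set \<Rightarrow> real) \<Rightarrow> bool" where
  "signed_borel_measure mu \<longleftrightarrow>
     (\<forall>F::nat \<Rightarrow> 'a set. range F \<subseteq> sets borel \<longrightarrow> disjoint_family F \<longrightarrow>
        (\<lambda>n. mu (F n)) sums mu (\<Union>n. F n))"

definition total_variation :: "('a::topological_space set \<Rightarrow> real) \<Rightarrow> 'a set \<Rightarrow> real" where
  "total_variation mu E =
     Sup {(\<Sum>A\<in>P. \<bar>mu A\<bar>) | P. finite P \<and> P \<subseteq> sets borel \<and> (\<forall>A\<in>P. A \<subseteq> E) \<and> disjoint P}"

definition tv_norm :: "('a::topological_space set \<Rightarrow> real) \<Rightarrow> real" where
  "tv_norm mu = total_variation mu UNIV"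

definition regular_signed :: "('a::topological_space set \<Rightarrow> real) \<Rightarrow> bool" where
  "regular_signed mu \<longleftrightarrow>
     (\<forall>E\<in>sets borel.
        total_variation mu E = (SUP K\<in>{K. compact K \<and> K \<subseteq> E}. total_variation mu K) \<and>
        total_variation mu E = (INF U\<in>{U. open U \<and> E \<subseteq> U}. total_variation mu U))"

definition real_M :: "('a::topological_space set \<Rightarrow> real) \<Rightarrow> bool" where
  "real_M mu \<longleftrightarrow> signed_borel_measure mu \<and> regular_signed mu \<and>
     bdd_above {(\<Sum>A\<in>P. \<bar>mu A\<bar>) | P. finite P \<and> P \<subseteq> sets borel \<and> disjoint P}"

definition jordan_decomp :: "('a::topological_space set \<Rightarrow> real) \<Rightarrow> 'a measure \<Rightarrow> 'a measure \<Rightarrow> bool" where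
  "jordan_decomp mu mup mum \<longleftrightarrow>
     sets mup = sets borel \<and> sets mum = sets borel \<and>
     finite_measure mup \<and> finite_measure mum \<and>
     (\<exists>S\<in>sets borel. emeasure mup S = 0 \<and> emeasure mum (- S) = 0) \<and>
     (\<forall>E\<in>sets borel. mu E = measure mup E - measure mum E)"

definition hahn_decomp :: "'a::topological_space measure \<Rightarrow> 'a measure \<Rightarrow> 'a set \<Rightarrow> 'a set \<Rightarrow> bool" where
  "hahn_decomp mup mum Ap Am \<longleftrightarrow>
     Ap \<in> sets borel \<and> Am \<in> sets borel \<and> Ap \<inter> Am = {} \<and> Ap \<union> Am = UNIV \<and>
     measure mup Am = 0 \<and> measure mum Ap = 0"

end

theory Submission
  imports Defs
begin

text \<open>By antisymmetry, a Borel set B with B and -B both positive (or both negative) for mu is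
  mu-null. The Hahn set A+ differs from V = A+ \<inter> -A- only by such a set, namely A+ \<inter> -A+,
  and likewise A- differs from -V only by A- \<inter> -A-. Hence mu+ and mu- are the restrictions of
  mu and -mu to V and -V; antisymmetry gives mu-(G) = -mu(-V) = mu(V) = mu+(G), while the
  variation norm of mu is mu+(G) + mu-(G).\<close>

lemma borel_uminus_image:
  fixes A :: "'a::topological_group_add set"
  assumes "A \<in> sets borel"
  shows "uminus ` A \<in> sets borel"
proof -
  have "uminus ` A = uminus -` A \<inter> space borel"
    by (auto simp: image_iff) (metis minus_minus)
  moreover have "(uminus :: 'a \<Rightarrow> 'a) \<in> borel_measurable borel"
    by (intro borel_measurable_continuous_onI continuous_intros)
  ultimately show ?thesis
    using assms by (metis measurable_sets)
qed

lemma sum_measure_disjoint_le_UNIV: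
  assumes "finite_measure M" and "sets M = sets borel"
    and "finite P" "P \<subseteq> sets borel" "disjoint P"
  shows "(\<Sum>A\<in>P. measure M A) \<le> measure M UNIV"
proof -
  interpret finite_measure M by fact
  have "(\<Sum>A\<in>P. measure M A) = measure M (\<Union>A\<in>P. A)"
    using assms by (intro finite_measure_finite_Union[of P "\<lambda>A. A", symmetric])
      (auto simp: disjoint_family_on_def disjoint_def)
  also have "\<dots> \<le> measure M (space M)"
    using assms by (intro finite_measure_mono) (auto dest: sets.sets_into_space)
  also have "space M = UNIV"
    using assms by (metis space_borel sets_eq_imp_space_eq)
  finally show ?thesis .
qed

lemma tv_norm_finite_measure:
  assumes "finite_measure M" and "sets M = sets borel"
  shows "tv_norm (measure M) = measure M UNIV"
  unfolding tv_norm_def total_variation_def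
proof (rule cSup_eq_maximum)
  show "measure M UNIV \<in> {\<Sum>A\<in>P. \<bar>measure M A\<bar> |P.
      finite P \<and> P \<subseteq> sets borel \<and> (\<forall>A\<in>P. A \<subseteq> UNIV) \<and> disjoint P}"
    by (intro CollectI exI[of _ "{UNIV}"]) (auto simp: disjoint_def)
next
  fix x
  assume "x \<in> {\<Sum>A\<in>P. \<bar>measure M A\<bar> |P.
      finite P \<and> P \<subseteq> sets borel \<and> (\<forall>A\<in>P. A \<subseteq> UNIV) \<and> disjoint P}"
  then obtain P where "finite P" "P \<subseteq> sets borel" "disjoint P"
    and "x = (\<Sum>A\<in>P. measure M A)"
    by auto
  then show "x \<le> measure M UNIV"
    using sum_measure_disjoint_le_UNIV[OF assms] by simp
qed

locale jordan_hahn =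
  fixes mu :: "'a::topological_space set \<Rightarrow> real"
    and mup mum :: "'a measure" and Ap Am :: "'a set"
  assumes jordan: "jordan_decomp mu mup mum"
    and hahn: "hahn_decomp mup mum Ap Am"
begin

lemma sets_mup: "sets mup = sets borel"
  and sets_mum: "sets mum = sets borel"
  and mu_eq_diff: "E \<in> sets borel \<Longrightarrow> mu E = measure mup E - measure mum E"
  using jordan unfolding jordan_decomp_def by auto

lemma Ap_borel: "Ap \<in> sets borel"
  and Am_borel: "Am \<in> sets borel"
  and Ap_Am_disjoint: "Ap \<inter> Am = {}"
  and Ap_Un_Am: "Ap \<union> Am = UNIV"
  using hahn unfolding hahn_decomp_def by auto

sublocale pos: finite_measure mup
  using jordan unfolding jordan_decomp_def by auto

sublocale neg: finite_measure mum
  using jordan unfolding jordan_decomp_def by auto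

lemma Am_null_mup: "Am \<in> null_sets mup"
  and Ap_null_mum: "Ap \<in> null_sets mum"
  using hahn Ap_borel Am_borel unfolding hahn_decomp_def
  by (auto simp: pos.emeasure_eq_measure neg.emeasure_eq_measure sets_mup sets_mum)

lemma measure_mup_subset_Am: "E \<subseteq> Am \<Longrightarrow> E \<in> sets borel \<Longrightarrow> measure mup E = 0"
  by (intro measure_eq_0_null_sets null_sets_subset[OF Am_null_mup]) (simp_all add: sets_mup)

lemma measure_mum_subset_Ap: "E \<subseteq> Ap \<Longrightarrow> E \<in> sets borel \<Longrightarrow> measure mum E = 0"
  by (intro measure_eq_0_null_sets null_sets_subset[OF Ap_null_mum]) (simp_all add: sets_mum)

lemma nonneg_subset_Ap: "E \<subseteq> Ap \<Longrightarrow> E \<in> sets borel \<Longrightarrow> 0 \<le> mu E"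
  using mu_eq_diff measure_mum_subset_Ap by simp

lemma nonpos_subset_Am: "E \<subseteq> Am \<Longrightarrow> E \<in> sets borel \<Longrightarrow> mu E \<le> 0"
  using mu_eq_diff measure_mup_subset_Am by simp

lemma mu_Un:
  assumes "A \<in> sets borel" "B \<in> sets borel" "A \<inter> B = {}"
  shows "mu (A \<union> B) = mu A + mu B"
proof -
  have "measure mup (A \<union> B) = measure mup A + measure mup B"
    using assms by (intro pos.finite_measure_Union) (auto simp: sets_mup)
  moreover have "measure mum (A \<union> B) = measure mum A + measure mum B"
    using assms by (intro neg.finite_measure_Union) (auto simp: sets_mum)
  ultimately show ?thesis
    using assms by (simp add: mu_eq_diff)
qed

lemma measure_mup_eq:
  assumes "E \<in> sets borel"
  shows "measure mup E = mu (E \<inter> Ap)"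
proof -
  have "E - Am = E \<inter> Ap"
    using Ap_Am_disjoint Ap_Un_Am by auto
  then have "measure mup E = measure mup (E \<inter> Ap)"
    using assms Am_null_mup by (metis measure_Diff_null_set sets_mup)
  also have "\<dots> = mu (E \<inter> Ap)"
    using assms Ap_borel by (simp add: mu_eq_diff measure_mum_subset_Ap)
  finally show ?thesis .
qed

lemma measure_mum_eq:
  assumes "E \<in> sets borel"
  shows "measure mum E = - mu (E \<inter> Am)"
proof -
  have "E - Ap = E \<inter> Am"
    using Ap_Am_disjoint Ap_Un_Am by auto
  then have "measure mum E = measure mum (E \<inter> Am)"
    using assms Ap_null_mum by (metis measure_Diff_null_set sets_mum)
  also have "\<dots> = - mu (E \<inter> Am)"
    using assms Am_borel by (simp add: mu_eq_diff measure_mup_subset_Am)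
  finally show ?thesis .
qed

lemma tv_norm_eq: "tv_norm mu = measure mup UNIV + measure mum UNIV"
  unfolding tv_norm_def total_variation_def
proof (rule cSup_eq_maximum)
  have "Ap \<noteq> Am"
    using Ap_Am_disjoint Ap_Un_Am by auto
  then have "(\<Sum>A\<in>{Ap, Am}. \<bar>mu A\<bar>) = measure mup UNIV + measure mum UNIV"
    using measure_mup_eq[of UNIV] measure_mum_eq[of UNIV] Ap_borel Am_borel
      nonneg_subset_Ap[of Ap] nonpos_subset_Am[of Am] by simp
  then show "measure mup UNIV + measure mum UNIV \<in> {\<Sum>A\<in>P. \<bar>mu A\<bar> |P.
      finite P \<and> P \<subseteq> sets borel \<and> (\<forall>A\<in>P. A \<subseteq> UNIV) \<and> disjoint P}"
    using Ap_borel Am_borel Ap_Am_disjoint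
    by (intro CollectI exI[of _ "{Ap, Am}"]) (auto simp: disjoint_def)
next
  fix x
  assume "x \<in> {\<Sum>A\<in>P. \<bar>mu A\<bar> |P.
      finite P \<and> P \<subseteq> sets borel \<and> (\<forall>A\<in>P. A \<subseteq> UNIV) \<and> disjoint P}"
  then obtain P where P: "finite P" "P \<subseteq> sets borel" "disjoint P"
    and x: "x = (\<Sum>A\<in>P. \<bar>mu A\<bar>)"
    by auto
  have "x \<le> (\<Sum>A\<in>P. measure mup A + measure mum A)"
    unfolding x using P(2) by (intro sum_mono) (auto simp: mu_eq_diff abs_le_iff)
  also have "\<dots> = (\<Sum>A\<in>P. measure mup A) + (\<Sum>A\<in>P. measure mum A)"
    by (simp add: sum.distrib)
  also have "\<dots> \<le> measure mup UNIV + measure mum UNIV"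
    using sum_measure_disjoint_le_UNIV[OF pos.finite_measure_axioms sets_mup P]
      sum_measure_disjoint_le_UNIV[OF neg.finite_measure_axioms sets_mum P]
    by simp
  finally show "x \<le> measure mup UNIV + measure mum UNIV" .
qed

end

locale antisymmetric_jordan_hahn = jordan_hahn mu mup mum Ap Am
  for mu :: "'a::topological_group_add set \<Rightarrow> real" and mup mum Ap Am +
  assumes antisym: "\<forall>A\<in>sets borel. mu (uminus ` A) = - mu A"
begin

lemma mu_uminus: "A \<in> sets borel \<Longrightarrow> mu (uminus ` A) = - mu A"
  using antisym by blast

lemma mu_eq_0_if_symmetric_subset_Ap:
  assumes "B \<in> sets borel" "B \<subseteq> Ap" "uminus ` B \<subseteq> Ap"
  shows "mu B = 0"
  using assms nonneg_subset_Ap[of B] nonneg_subset_Ap[of "uminus ` B"]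
  by (simp add: mu_uminus borel_uminus_image)

lemma mu_eq_0_if_symmetric_subset_Am:
  assumes "B \<in> sets borel" "B \<subseteq> Am" "uminus ` B \<subseteq> Am"
  shows "mu B = 0"
  using assms nonpos_subset_Am[of B] nonpos_subset_Am[of "uminus ` B"]
  by (simp add: mu_uminus borel_uminus_image)

lemma uminus_Hahn_partition:
  "uminus ` Ap \<inter> uminus ` Am = {}" "uminus ` Ap \<union> uminus ` Am = UNIV"
  using Ap_Am_disjoint Ap_Un_Am
  by (simp_all add: image_Int[symmetric] image_Un[symmetric] surj_def)

lemma mu_Int_Ap_eq:
  assumes "E \<in> sets borel"
  shows "mu (E \<inter> Ap) = mu (E \<inter> (Ap \<inter> uminus ` Am))"
proof -
  have "E \<inter> Ap = E \<inter> (Ap \<inter> uminus ` Am) \<union> E \<inter> (Ap \<inter> uminus ` Ap)"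
    "E \<inter> (Ap \<inter> uminus ` Am) \<inter> (E \<inter> (Ap \<inter> uminus ` Ap)) = {}"
    using uminus_Hahn_partition by auto
  moreover have "mu (E \<inter> (Ap \<inter> uminus ` Ap)) = 0"
    using assms Ap_borel borel_uminus_image[OF Ap_borel]
    by (intro mu_eq_0_if_symmetric_subset_Ap) auto
  ultimately show ?thesis
    using assms Ap_borel Am_borel by (metis mu_Un borel_uminus_image sets.Int add_0_right)
qed

lemma mu_Int_Am_eq:
  assumes "E \<in> sets borel"
  shows "mu (E \<inter> Am) = mu (E \<inter> uminus ` (Ap \<inter> uminus ` Am))"
proof -
  have V: "uminus ` (Ap \<inter> uminus ` Am) = Am \<inter> uminus ` Ap"
    by (auto simp: image_iff) (metis minus_minus)+
  have "E \<inter> Am = E \<inter> (Am \<inter> uminus ` Ap) \<union> E \<inter> (Am \<inter> uminus ` Am)"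
    "E \<inter> (Am \<inter> uminus ` Ap) \<inter> (E \<inter> (Am \<inter> uminus ` Am)) = {}"
    using uminus_Hahn_partition by auto
  moreover have "mu (E \<inter> (Am \<inter> uminus ` Am)) = 0"
    using assms Am_borel borel_uminus_image[OF Am_borel]
    by (intro mu_eq_0_if_symmetric_subset_Am) auto
  ultimately show ?thesis
    unfolding V using assms Ap_borel Am_borel
    by (metis mu_Un borel_uminus_image sets.Int add_0_right)
qed

lemma Ap_Int_uminus_Am_disjoint:
  "(Ap \<inter> uminus ` Am) \<inter> uminus ` (Ap \<inter> uminus ` Am) = {}"
  using Ap_Am_disjoint by auto

lemma measures_eq_mu_V:
  defines "V \<equiv> Ap \<inter> uminus ` Am"
  shows "measure mup V = mu V" "measure mup UNIV = mu V"
    "measure mum (uminus ` V) = mu V" "measure mum UNIV = mu V"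
proof -
  have V: "V \<in> sets borel" "V \<subseteq> Ap" "uminus ` V \<subseteq> Am"
    unfolding V_def using Ap_borel Am_borel by (auto intro: borel_uminus_image)
  show "measure mup V = mu V"
    using V measure_mup_eq[of V] by (simp add: Int_absorb2)
  show "measure mup UNIV = mu V"
    using measure_mup_eq[of UNIV] mu_Int_Ap_eq[of UNIV] unfolding V_def by simp
  show "measure mum (uminus ` V) = mu V"
    using V measure_mum_eq[of "uminus ` V"] by (simp add: Int_absorb2 mu_uminus borel_uminus_image)
  show "measure mum UNIV = mu V"
    using V measure_mum_eq[of UNIV] mu_Int_Am_eq[of UNIV] unfolding V_def
    by (simp add: mu_uminus)
qed

end

theorem lemma1:
  fixes mu :: "'a::{topological_ab_group_add, t2_space} set \<Rightarrow> real"
    and mup mum :: "'a measure" and Ap Am V :: "'a set"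
  assumes lc: "locally_compact_space (euclidean :: 'a topology)"
    and M: "real_M mu"
    and antisym: "\<forall>A\<in>sets borel. mu (uminus ` A) = - mu A"
    and J: "jordan_decomp mu mup mum"
    and H: "hahn_decomp mup mum Ap Am"
    and V: "V = Ap \<inter> uminus ` Am"
  shows "V \<inter> uminus ` V = {}
    \<and> (\<forall>E\<in>sets borel.
          measure mup E = mu (E \<inter> Ap) \<and> mu (E \<inter> Ap) = mu (E \<inter> V) \<and>
          measure mum E = - mu (E \<inter> Am) \<and> - mu (E \<inter> Am) = - mu (E \<inter> uminus ` V))
    \<and> measure mup V = tv_norm (measure mup)
    \<and> tv_norm (measure mup) = tv_norm (measure mum)
    \<and> tv_norm (measure mum) = measure mum (uminus ` V)
    \<and> measure mum (uminus ` V) = tv_norm mu / 2"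
proof -
  interpret antisymmetric_jordan_hahn mu mup mum Ap Am
    using J H antisym by unfold_locales
  have "tv_norm (measure mup) = measure mup UNIV" "tv_norm (measure mum) = measure mum UNIV"
    by (simp_all add: tv_norm_finite_measure pos.finite_measure_axioms
        neg.finite_measure_axioms sets_mup sets_mum)
  then show ?thesis
    unfolding V
    using Ap_Int_uminus_Am_disjoint measure_mup_eq mu_Int_Ap_eq measure_mum_eq mu_Int_Am_eq
      measures_eq_mu_V tv_norm_eq
    by simp
qed

end
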